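(* Let $F,K\ge1$ and $0\le Z<F$ be integers. If some element of $S$ occupies exactly $Z+1$ cells of an $S$-PDA$(F,K,Z)$, then $|S|\ge (F-Z-1)(Z+1)+1$.
   Context: A placement delivery array $S$-PDA$(F,K,Z)$ is an $F\times K$ array $R=(r_{j,k})$, $1\le j\le F$, $1\le k\le K$, over a finite set $S$ such that: (1) each cell is either empty or contains an element of $S$; (2) each column contains exactly $Z$ empty cells; (3) each element of $S$ occurs at most once in each row and at most once in each column; (4) if two distinct nonempty cells satisfy $r_{j_1,k_1}=r_{j_2,k_2}=t\in S$, then the cells $r_{j_1,k_2}$ and $r_{j_2,k_1}$ are empty. *)

theory Defs
  imports Main
begin

definition is_PDA :: "'a set \<Rightarrow> nat \<Rightarrow> nat \<Rightarrow> nat \<Rightarrow> (nat \<Rightarrow> nat \<Rightarrow> 'a option) \<Rightarrow> bool" where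
  "is_PDA S F K Z R \<longleftrightarrow>
     finite S \<and>
     (\<forall>j\<in>{1..F}. \<forall>k\<in>{1..K}. R j k = None \<or> (\<exists>t\<in>S. R j k = Some t)) \<and>
     (\<forall>k\<in>{1..K}. card {j\<in>{1..F}. R j k = None} = Z) \<and>
     (\<forall>t\<in>S. \<forall>j\<in>{1..F}. \<forall>k1\<in>{1..K}. \<forall>k2\<in>{1..K}.
        R j k1 = Some t \<and> R j k2 = Some t \<longrightarrow> k1 = k2) \<and>
     (\<forall>t\<in>S. \<forall>k\<in>{1..K}. \<forall>j1\<in>{1..F}. \<forall>j2\<in>{1..F}.
        R j1 k = Some t \<and> R j2 k = Some t \<longrightarrow> j1 = j2) \<and>
     (\<forall>t\<in>S. \<forall>j1\<in>{1..F}. \<forall>j2\<in>{1..F}. \<forall>k1\<in>{1..K}. \<forall>k2\<in>{1..K}.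
        (j1, k1) \<noteq> (j2, k2) \<and> R j1 k1 = Some t \<and> R j2 k2 = Some t \<longrightarrow>
        R j1 k2 = None \<and> R j2 k1 = None)"

definition occ_cells :: "nat \<Rightarrow> nat \<Rightarrow> (nat \<Rightarrow> nat \<Rightarrow> 'a option) \<Rightarrow> 'a \<Rightarrow> (nat \<times> nat) set" where
  "occ_cells F K R t = {(j, k). j \<in> {1..F} \<and> k \<in> {1..K} \<and> R j k = Some t}"

end

theory Submission
  imports Defs
begin

text \<open>Let \<open>t\<close> occupy the cells \<open>(j\<^sub>i, k\<^sub>i)\<close>, \<open>i = 0..Z\<close>; the rows \<open>j\<^sub>i\<close> are distinct, and so are
  the columns \<open>k\<^sub>i\<close>. By condition (4), column \<open>k\<^sub>i\<close> is empty in every row \<open>j\<^sub>l\<close> with \<open>l \<noteq> i\<close>;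
  these are already \<open>Z\<close> empty cells, so column \<open>k\<^sub>i\<close> is filled in all the other
  \<open>F - Z - 1\<close> rows. The symbols in these \<open>(F - Z - 1)(Z + 1)\<close> cells differ from \<open>t\<close> and
  from each other: by (4), equal symbols in cells \<open>(j, k)\<close> and \<open>(j', k')\<close> of this
  rectangle would make its cell \<open>(j, k')\<close> empty.\<close>

definition empty_rows :: "nat \<Rightarrow> (nat \<Rightarrow> nat \<Rightarrow> 'a option) \<Rightarrow> nat \<Rightarrow> nat set" where
  "empty_rows F R k = {j \<in> {1..F}. R j k = None}"

lemma occ_cells_subset: "occ_cells F K R t \<subseteq> {1..F} \<times> {1..K}"
  by (auto simp: occ_cells_def)

lemma finite_occ_cells: "finite (occ_cells F K R t)"
  by (rule finite_subset[OF occ_cells_subset]) simp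

lemma is_PDA_filled_cell:
  assumes "is_PDA S F K Z R" "j \<in> {1..F}" "k \<in> {1..K}" "R j k \<noteq> None"
  obtains s where "s \<in> S" "R j k = Some s"
proof -
  have "R j k = None \<or> (\<exists>s \<in> S. R j k = Some s)"
    using assms(1-3) unfolding is_PDA_def by blast
  then show thesis
    using assms(4) that by blast
qed

lemma card_empty_rows:
  assumes "is_PDA S F K Z R" "k \<in> {1..K}"
  shows "card (empty_rows F R k) = Z"
  using assms unfolding is_PDA_def empty_rows_def by blast

lemma is_PDA_row_distinct:
  assumes "is_PDA S F K Z R" "t \<in> S" "j \<in> {1..F}" "k1 \<in> {1..K}" "k2 \<in> {1..K}"
    and "R j k1 = Some t" "R j k2 = Some t"
  shows "k1 = k2"
  using assms unfolding is_PDA_def by meson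

lemma is_PDA_column_distinct:
  assumes "is_PDA S F K Z R" "t \<in> S" "k \<in> {1..K}" "j1 \<in> {1..F}" "j2 \<in> {1..F}"
    and "R j1 k = Some t" "R j2 k = Some t"
  shows "j1 = j2"
  using assms unfolding is_PDA_def by meson

lemma inj_on_fst_occ_cells:
  assumes "is_PDA S F K Z R" "t \<in> S"
  shows "inj_on fst (occ_cells F K R t)"
  using is_PDA_row_distinct[OF assms] by (auto simp: inj_on_def occ_cells_def)

lemma inj_on_snd_occ_cells:
  assumes "is_PDA S F K Z R" "t \<in> S"
  shows "inj_on snd (occ_cells F K R t)"
  using is_PDA_column_distinct[OF assms] by (auto simp: inj_on_def occ_cells_def)

lemma is_PDA_cross_empty:
  assumes "is_PDA S F K Z R" "t \<in> S"
    and "j1 \<in> {1..F}" "j2 \<in> {1..F}" "k1 \<in> {1..K}" "k2 \<in> {1..K}"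
    and "(j1, k1) \<noteq> (j2, k2)" "R j1 k1 = Some t" "R j2 k2 = Some t"
  shows "R j1 k2 = None"
proof -
  have "\<forall>t\<in>S. \<forall>j1\<in>{1..F}. \<forall>j2\<in>{1..F}. \<forall>k1\<in>{1..K}. \<forall>k2\<in>{1..K}.
      (j1, k1) \<noteq> (j2, k2) \<and> R j1 k1 = Some t \<and> R j2 k2 = Some t \<longrightarrow> R j1 k2 = None"
    using assms(1) unfolding is_PDA_def by meson
  then show ?thesis
    using assms(2-9) by blast
qed

lemma occ_rows_subset_empty_rows:
  assumes "is_PDA S F K Z R" "t \<in> S" "(i, k) \<in> occ_cells F K R t"
  shows "fst ` occ_cells F K R t - {i} \<subseteq> empty_rows F R k"
proof
  fix j assume "j \<in> fst ` occ_cells F K R t - {i}"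
  then obtain l where "(j, l) \<in> occ_cells F K R t" "j \<noteq> i" by force
  with assms have "R j k = None"
    by (intro is_PDA_cross_empty[of S F K Z R t j i l k]) (auto simp: occ_cells_def)
  with \<open>(j, l) \<in> occ_cells F K R t\<close> show "j \<in> empty_rows F R k"
    by (auto simp: occ_cells_def empty_rows_def)
qed

lemma empty_rows_eq_occ_rows:
  assumes "is_PDA S F K Z R" "t \<in> S" "card (occ_cells F K R t) = Z + 1"
    and "(i, k) \<in> occ_cells F K R t"
  shows "empty_rows F R k = fst ` occ_cells F K R t - {i}"
proof -
  have "i \<in> fst ` occ_cells F K R t"
    using assms(4) by force
  then have "card (fst ` occ_cells F K R t - {i}) = Z"
    using assms(3) card_image[OF inj_on_fst_occ_cells[OF assms(1,2)]] finite_occ_cells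
    by (simp add: card_Diff_singleton)
  moreover have "card (empty_rows F R k) = Z"
    using assms card_empty_rows[OF assms(1)] by (auto simp: occ_cells_def)
  moreover have "finite (empty_rows F R k)"
    by (simp add: empty_rows_def)
  ultimately show ?thesis
    using occ_rows_subset_empty_rows[OF assms(1,2,4)] by (metis card_subset_eq)
qed

lemma filled_outside_occ_rows:
  assumes "is_PDA S F K Z R" "t \<in> S" "card (occ_cells F K R t) = Z + 1"
    and "k \<in> snd ` occ_cells F K R t" "j \<in> {1..F} - fst ` occ_cells F K R t"
  obtains s where "s \<in> S - {t}" "R j k = Some s"
proof -
  obtain i where ik: "(i, k) \<in> occ_cells F K R t"
    using assms(4) by force
  have k: "k \<in> {1..K}"
    using ik by (auto simp: occ_cells_def)
  have "j \<notin> empty_rows F R k"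
    using empty_rows_eq_occ_rows[OF assms(1-3) ik] assms(5) by blast
  then obtain s where "s \<in> S" "R j k = Some s"
    using is_PDA_filled_cell[OF assms(1) _ k] assms(5) by (auto simp: empty_rows_def)
  moreover have "s \<noteq> t"
    using \<open>R j k = Some s\<close> assms(5) k by (force simp: occ_cells_def)
  ultimately show ?thesis
    using that by blast
qed

lemma entries_outside_occ_rows_inj:
  assumes "is_PDA S F K Z R" "t \<in> S" "card (occ_cells F K R t) = Z + 1"
  defines "P \<equiv> ({1..F} - fst ` occ_cells F K R t) \<times> snd ` occ_cells F K R t"
  shows "inj_on (\<lambda>(j, k). the (R j k)) P"
    and "(\<lambda>(j, k). the (R j k)) ` P \<subseteq> S - {t}"
proof -
  have filled: "\<exists>s \<in> S - {t}. R j k = Some s" if "(j, k) \<in> P" for j k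
  proof -
    from that have "k \<in> snd ` occ_cells F K R t" "j \<in> {1..F} - fst ` occ_cells F K R t"
      by (auto simp: P_def)
    then obtain s where "s \<in> S - {t}" "R j k = Some s"
      by (rule filled_outside_occ_rows[OF assms(1-3)])
    then show ?thesis
      by blast
  qed
  have P_sub: "P \<subseteq> {1..F} \<times> {1..K}"
    using occ_cells_subset[of F K R t] unfolding P_def by force
  show "inj_on (\<lambda>(j, k). the (R j k)) P"
  proof (rule inj_onI, clarify)
    fix j k j' k'
    assume jk: "(j, k) \<in> P" and jk': "(j', k') \<in> P" and eq: "the (R j k) = the (R j' k')"
    obtain s where s: "s \<in> S" "R j k = Some s" "R j' k' = Some s"
      using filled[OF jk] filled[OF jk'] eq by force
    show "j = j' \<and> k = k'"
    proof (rule ccontr)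
      assume "\<not> (j = j' \<and> k = k')"
      then have "R j k' = None"
        using jk jk' P_sub s by (intro is_PDA_cross_empty[OF assms(1) s(1), of j j' k k']) auto
      moreover have "(j, k') \<in> P"
        using jk jk' unfolding P_def by blast
      ultimately show False
        using filled by force
    qed
  qed
  show "(\<lambda>(j, k). the (R j k)) ` P \<subseteq> S - {t}"
    using filled by force
qed

theorem mainTheorem13:
  fixes S :: "'a set" and F K Z :: nat and R :: "nat \<Rightarrow> nat \<Rightarrow> 'a option"
  assumes "F \<ge> 1" and "K \<ge> 1" and "Z < F"
    and "is_PDA S F K Z R"
    and "t \<in> S" and "card (occ_cells F K R t) = Z + 1"
  shows "int (card S) \<ge> (int F - int Z - 1) * (int Z + 1) + 1"
proof -
  let ?C = "occ_cells F K R t"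
  let ?P = "({1..F} - fst ` ?C) \<times> snd ` ?C"
  have "finite S"
    using assms(4) by (simp add: is_PDA_def)
  have "card (fst ` ?C) = Z + 1" "card (snd ` ?C) = Z + 1"
    using assms(6) card_image[OF inj_on_fst_occ_cells[OF assms(4,5)]]
      card_image[OF inj_on_snd_occ_cells[OF assms(4,5)]] by simp_all
  moreover have "card ({1..F} - fst ` ?C) = F - card (fst ` ?C)"
    using occ_cells_subset[of F K R t] finite_occ_cells[of F K R t]
    by (subst card_Diff_subset) force+
  ultimately have "card ?P = (F - (Z + 1)) * (Z + 1)"
    by (simp add: card_cartesian_product)
  then have "(F - (Z + 1)) * (Z + 1) \<le> card (S - {t})"
    using card_inj_on_le[OF entries_outside_occ_rows_inj[OF assms(4-6)]] \<open>finite S\<close> by simp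
  also have "\<dots> < card S"
    using \<open>finite S\<close> assms(5) by (rule card_Diff1_less)
  finally have "int ((F - (Z + 1)) * (Z + 1) + 1) \<le> int (card S)"
    by linarith
  moreover have "int (F - (Z + 1)) = int F - int Z - 1"
    using assms(3) by simp
  ultimately show ?thesis
    by (simp only: of_nat_add of_nat_mult of_nat_1)
qed

end
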